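(* For every set $U\subset\mathcal{A}_0(\overline D)$ we have $$U^*=\overline{(\mathrm{cm}(U))^{\perp}},$$ where the closure is taken in the space $\mathcal{A}$.
   Context: $D=\{z:|z|<1\}$, $\overline D$ its closure. $\mathcal{A}$ is the space of functions $f(z)=\sum_{k\ge0}a_k(f)z^k$ analytic in $D$, with the topology of locally uniform convergence; $\mathcal{A}_0=\{f\in\mathcal{A}: a_0(f)=1\}$. $\mathcal{A}(\overline D)$ is the set of functions analytic in some disk $\{|z|<R\}$ with $R>1$, and $\mathcal{A}_0(\overline D)=\{g\in\mathcal{A}(\overline D):a_0(g)=1\}$. The Hadamard product is $(f*g)(z)=\sum_{k\ge0}a_k(f)a_k(g)z^k$. For $U\subset\mathcal{A}_0$, $U^*=\{g\in\mathcal{A}_0:(f*g)(z)\ne0 \text{ for all } z\in D,\ f\in U\}$. For $x\in\overline D$, $(P_xf)(z)=f(xz)$, and $\mathrm{cm}(U)=\{P_xf: f\in U,\ x\in\overline D\}$. For $U\subset\mathcal{A}_0(\overline D)$, $U^{\perp}=\{h\in\mathcal{A}_0:(g*h)(1)\ne0\text{ for all } g\in U\}$. *)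

theory Defs
  imports "HOL-Complex_Analysis.Complex_Analysis"
begin

text \<open>Functions analytic in the unit disk D are represented as functions
  complex => complex holomorphic on ball 0 1 (values outside D are irrelevant).\<close>

definition coeffA :: "(complex \<Rightarrow> complex) \<Rightarrow> nat \<Rightarrow> complex" where
  "coeffA f k = (deriv ^^ k) f 0 / of_nat (fact k)"

definition A_space :: "(complex \<Rightarrow> complex) set" where
  "A_space = {f. f holomorphic_on ball 0 1}"

definition A0 :: "(complex \<Rightarrow> complex) set" where
  "A0 = {f \<in> A_space. coeffA f 0 = 1}"

definition A_cl :: "(complex \<Rightarrow> complex) set" where
  "A_cl = {g. \<exists>R>1. g holomorphic_on ball 0 R}"

definition A0_cl :: "(complex \<Rightarrow> complex) set" where
  "A0_cl = {g \<in> A_cl. coeffA g 0 = 1}"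

definition hadamard :: "(complex \<Rightarrow> complex) \<Rightarrow> (complex \<Rightarrow> complex) \<Rightarrow> complex \<Rightarrow> complex" where
  "hadamard f g z = (\<Sum>k. coeffA f k * coeffA g k * z ^ k)"

definition dual :: "(complex \<Rightarrow> complex) set \<Rightarrow> (complex \<Rightarrow> complex) set" where
  "dual U = {g \<in> A0. \<forall>f\<in>U. \<forall>z\<in>ball 0 1. hadamard f g z \<noteq> 0}"

definition Px :: "complex \<Rightarrow> (complex \<Rightarrow> complex) \<Rightarrow> (complex \<Rightarrow> complex)" where
  "Px x f = (\<lambda>z. f (x * z))"

definition cm :: "(complex \<Rightarrow> complex) set \<Rightarrow> (complex \<Rightarrow> complex) set" where
  "cm U = {Px x f | f x. f \<in> U \<and> x \<in> cball 0 1}"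

definition perp :: "(complex \<Rightarrow> complex) set \<Rightarrow> (complex \<Rightarrow> complex) set" where
  "perp U = {h \<in> A0. \<forall>g\<in>U. hadamard g h 1 \<noteq> 0}"

text \<open>Closure in A w.r.t. locally uniform convergence on D: h is in the closure
  iff every basic neighbourhood (uniform closeness on a compact disk of radius r<1)
  meets S.\<close>
definition A_closure :: "(complex \<Rightarrow> complex) set \<Rightarrow> (complex \<Rightarrow> complex) set" where
  "A_closure S = {h \<in> A_space. \<forall>r<1. \<forall>e>0. \<exists>g\<in>S. \<forall>z\<in>cball 0 r. cmod (g z - h z) < e}"

end

theory Submission
  imports Defs
begin

(* Since (P_x f * g)(1) = (f * g)(x), the set perp(cm U) consists of those g in A_0 for which
   f * g has no zeros on the closed disc, for every f in U.  If g is in U^*, the dilations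
   P_r g (0 <= r < 1) therefore lie in perp(cm U), and they tend to g locally uniformly as r -> 1.
   Conversely, the Taylor coefficients of f in U decay like R^-k for some R > 1, so by the Cauchy
   estimates g -> f * g is continuous for locally uniform convergence in D.  A limit h of
   functions h_n in perp(cm U) thus makes f * h the locally uniform limit of the zero-free
   functions f * h_n, and Hurwitz's theorem together with (f * h)(0) = 1 shows that f * h has
   no zeros in D. *)

lemma coeffA_0 [simp]: "coeffA f 0 = f 0"
  by (simp add: coeffA_def)

lemma norm_coeffA_le:
  assumes hol: "f holomorphic_on ball 0 R" and s: "0 < s" "s < R"
    and bound: "\<And>w. norm w = s \<Longrightarrow> norm (f w) \<le> B"
  shows "norm (coeffA f k) \<le> B / s ^ k"
proof -
  have "cball 0 s \<subseteq> ball (0::complex) R"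
    using s by auto
  then have "norm ((deriv ^^ k) f 0) \<le> fact k * B / s ^ k"
    using hol bound s
    by (intro Cauchy_inequality)
       (auto intro: holomorphic_on_imp_continuous_on continuous_on_subset[of "ball 0 R"])
  then show ?thesis
    by (simp add: coeffA_def norm_divide field_simps)
qed

lemma coeffA_geometric_bound:
  assumes hol: "f holomorphic_on ball 0 R" and s: "0 < s" "s < R"
  obtains B where "\<And>k. norm (coeffA f k) \<le> B / s ^ k"
proof -
  have "cball 0 s \<subseteq> ball (0::complex) R"
    using s by auto
  then have "compact (f ` cball 0 s)"
    using hol by (intro compact_continuous_image)
      (auto intro: holomorphic_on_imp_continuous_on continuous_on_subset[of "ball 0 R"])
  then obtain B where "\<And>w. w \<in> cball 0 s \<Longrightarrow> norm (f w) \<le> B"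
    by (meson bounded_iff compact_imp_bounded image_eqI)
  then show ?thesis
    using norm_coeffA_le[OF hol s] that by (metis mem_cball_0 order_refl)
qed

lemma coeffA_diff:
  assumes "f holomorphic_on ball 0 R" "g holomorphic_on ball 0 R" "0 < R"
  shows "coeffA (\<lambda>w. f w - g w) k = coeffA f k - coeffA g k"
  using higher_deriv_diff[OF assms(1,2) open_ball, of 0 k] assms(3)
  by (simp add: coeffA_def diff_divide_distrib)

lemma mult_in_ball:
  assumes "norm (x::complex) \<le> 1" "z \<in> ball 0 R"
  shows "x * z \<in> ball 0 R"
proof -
  have "norm x * norm z \<le> norm z"
    using assms(1) by (simp add: mult_left_le_one_le)
  then show ?thesis
    using assms(2) by (simp add: norm_mult)
qed

lemma Px_holomorphic:
  assumes "f holomorphic_on ball 0 R" "norm x \<le> 1"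
  shows "Px x f holomorphic_on ball 0 R"
proof -
  have "(f \<circ> (\<lambda>z. x * z)) holomorphic_on ball 0 R"
    using assms mult_in_ball by (intro holomorphic_on_compose_gen) (auto intro: holomorphic_intros)
  then show ?thesis
    by (simp add: Px_def o_def)
qed

lemma coeffA_Px:
  assumes "f holomorphic_on ball 0 R" "norm x \<le> 1" "0 < R"
  shows "coeffA (Px x f) k = x ^ k * coeffA f k"
proof -
  have "(deriv ^^ k) (\<lambda>w. f (x * w)) 0 = x ^ k * (deriv ^^ k) f (x * 0)"
    using assms mult_in_ball
    by (intro higher_deriv_compose_linear[OF assms(1), where S = "ball 0 R"]) auto
  then show ?thesis
    by (simp add: coeffA_def Px_def)
qed

lemma hadamard_Px_left:
  assumes "f holomorphic_on ball 0 R" "norm x \<le> 1" "0 < R"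
  shows "hadamard (Px x f) g 1 = hadamard f g x"
  unfolding hadamard_def coeffA_Px[OF assms] by (simp add: mult_ac)

lemma hadamard_Px_right:
  assumes "g holomorphic_on ball 0 R" "norm x \<le> 1" "0 < R"
  shows "hadamard f (Px x g) z = hadamard f g (x * z)"
  unfolding hadamard_def coeffA_Px[OF assms] by (simp add: mult_ac power_mult_distrib)

lemma hadamard_0: "hadamard f g 0 = f 0 * g 0"
  by (simp add: hadamard_def)

lemma norm_hadamard_term_le:
  assumes "norm (coeffA f k) \<le> A / \<rho> ^ k" "norm (coeffA g k) \<le> B / t ^ k"
    and "norm z \<le> t" "0 < t" "0 < \<rho>" "0 \<le> A" "0 \<le> B"
  shows "norm (coeffA f k * coeffA g k * z ^ k) \<le> A * B * (1 / \<rho>) ^ k"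
proof -
  have "norm (coeffA f k * coeffA g k * z ^ k) = norm (coeffA f k) * norm (coeffA g k) * norm z ^ k"
    by (simp add: norm_mult norm_power)
  also have "\<dots> \<le> (A / \<rho> ^ k) * (B / t ^ k) * t ^ k"
    using assms by (intro mult_mono power_mono) auto
  also have "\<dots> = A * B * (1 / \<rho>) ^ k"
    using assms by (simp add: field_simps)
  finally show ?thesis .
qed

lemma hadamard_geometric_estimate:
  assumes A: "\<And>k. norm (coeffA f k) \<le> A / \<rho> ^ k" and B: "\<And>k. norm (coeffA g k) \<le> B / t ^ k"
    and \<rho>: "1 < \<rho>" and t: "0 < t" "norm z \<le> t"
  shows "summable (\<lambda>k. coeffA f k * coeffA g k * z ^ k)"
    and "norm (hadamard f g z) \<le> A * B * (\<rho> / (\<rho> - 1))"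
proof -
  have "0 \<le> A" "0 \<le> B"
    using A[of 0] B[of 0] by (simp_all add: order_trans[OF norm_ge_zero])
  then have term_le: "norm (coeffA f k * coeffA g k * z ^ k) \<le> A * B * (1 / \<rho>) ^ k" for k
    using norm_hadamard_term_le[OF A B t(2,1)] \<rho> by simp
  have "(\<lambda>k. (1 / \<rho>) ^ k) sums (1 / (1 - 1 / \<rho>))"
    using \<rho> by (intro geometric_sums) simp
  moreover have "1 / (1 - 1 / \<rho>) = \<rho> / (\<rho> - 1)"
    using \<rho> by (simp add: field_simps)
  ultimately have geometric: "(\<lambda>k. A * B * (1 / \<rho>) ^ k) sums (A * B * (\<rho> / (\<rho> - 1)))"
    by (metis sums_mult)
  show summable: "summable (\<lambda>k. coeffA f k * coeffA g k * z ^ k)"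
    using sums_summable[OF geometric] term_le by (rule summable_comparison_test'[where N = 0])
  have "norm (hadamard f g z) \<le> (\<Sum>k. A * B * (1 / \<rho>) ^ k)"
    unfolding hadamard_def using term_le sums_summable[OF geometric] by (rule norm_suminf_le)
  then show "norm (hadamard f g z) \<le> A * B * (\<rho> / (\<rho> - 1))"
    using geometric by (simp add: sums_iff)
qed

lemma summable_hadamard:
  assumes f: "f holomorphic_on ball 0 R" "1 < R" and g: "g holomorphic_on ball 0 1"
    and z: "norm z < 1"
  shows "summable (\<lambda>k. coeffA f k * coeffA g k * z ^ k)"
proof -
  obtain A where A: "\<And>k. norm (coeffA f k) \<le> A / ((1 + R) / 2) ^ k"
    by (rule coeffA_geometric_bound[OF f(1), of "(1 + R) / 2"]) (use f(2) in auto)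
  obtain B where B: "\<And>k. norm (coeffA g k) \<le> B / ((1 + norm z) / 2) ^ k"
    by (rule coeffA_geometric_bound[OF g, of "(1 + norm z) / 2"]) (use z in \<open>auto simp: add_pos_nonneg\<close>)
  show ?thesis
    using f(2) z by (intro hadamard_geometric_estimate(1)[OF A B]) (auto simp: add_pos_nonneg)
qed

lemma hadamard_holomorphic:
  assumes f: "f holomorphic_on ball 0 R" "1 < R" and g: "g holomorphic_on ball 0 1"
  shows "hadamard f g holomorphic_on ball 0 1"
proof (rule power_series_holomorphic[where a = "\<lambda>k. coeffA f k * coeffA g k"])
  fix z :: complex assume "z \<in> ball 0 1"
  then have "summable (\<lambda>k. coeffA f k * coeffA g k * z ^ k)"
    by (intro summable_hadamard[OF f g]) simp
  then show "(\<lambda>k. coeffA f k * coeffA g k * (z - 0) ^ k) sums hadamard f g z"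
    by (simp add: hadamard_def summable_sums)
qed

lemma hadamard_diff:
  assumes f: "f holomorphic_on ball 0 R" "1 < R"
    and g: "g holomorphic_on ball 0 1" and h: "h holomorphic_on ball 0 1" and z: "norm z < 1"
  shows "hadamard f (\<lambda>w. g w - h w) z = hadamard f g z - hadamard f h z"
  unfolding hadamard_def coeffA_diff[OF g h zero_less_one]
  by (subst suminf_diff[OF summable_hadamard[OF f g z] summable_hadamard[OF f h z]])
     (simp add: algebra_simps)

lemma uniform_limit_hadamard:
  assumes f: "f holomorphic_on ball 0 R" "1 < R"
    and hs: "\<And>n. hs n holomorphic_on ball 0 1" and h: "h holomorphic_on ball 0 1"
    and lim: "\<And>t. t < 1 \<Longrightarrow> uniform_limit (cball 0 t) hs h sequentially"
    and s: "s < 1"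
  shows "uniform_limit (cball 0 s) (\<lambda>n. hadamard f (hs n)) (hadamard f h) sequentially"
proof (rule uniform_limitI)
  fix e :: real assume e: "0 < e"
  define t where "t = max s (1 / 2)"
  define \<rho> where "\<rho> = (1 + R) / 2"
  have t: "0 < t" "t < 1" "s \<le> t"
    using s by (auto simp: t_def)
  have \<rho>: "1 < \<rho>" "\<rho> < R"
    using f(2) by (auto simp: \<rho>_def)
  obtain A where A: "\<And>k. norm (coeffA f k) \<le> A / \<rho> ^ k"
    by (rule coeffA_geometric_bound[OF f(1), of \<rho>]) (use \<rho> in auto)
  define C where "C = A * (\<rho> / (\<rho> - 1))"
  define \<delta> where "\<delta> = e / (C + 1)"
  have "0 \<le> C"
    using A[of 0] \<rho> by (simp add: C_def order_trans[OF norm_ge_zero])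
  then have \<delta>: "0 < \<delta>" "C * \<delta> < e"
    using e by (simp_all add: \<delta>_def field_simps)
  have "\<forall>\<^sub>F n in sequentially. \<forall>w\<in>cball 0 t. dist (hs n w) (h w) < \<delta>"
    using uniform_limitD[OF lim[OF t(2)] \<delta>(1)] .
  then show "\<forall>\<^sub>F n in sequentially. \<forall>z\<in>cball 0 s. dist (hadamard f (hs n) z) (hadamard f h z) < e"
  proof (rule eventually_mono)
    fix n assume close: "\<forall>w\<in>cball 0 t. dist (hs n w) (h w) < \<delta>"
    \<comment> \<open>Cauchy estimates on the circle of radius t turn uniform closeness of hs n and h
      into geometric decay of the coefficients of their difference.\<close>
    have coeff: "norm (coeffA (\<lambda>w. hs n w - h w) k) \<le> \<delta> / t ^ k" for k
      using hs h close t
      by (intro norm_coeffA_le[of _ 1] holomorphic_on_diff) (auto simp: dist_norm intro: less_imp_le)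
    show "\<forall>z\<in>cball 0 s. dist (hadamard f (hs n) z) (hadamard f h z) < e"
    proof
      fix z :: complex assume "z \<in> cball 0 s"
      then have z: "norm z \<le> t" "norm z < 1"
        using t by auto
      have "dist (hadamard f (hs n) z) (hadamard f h z) = norm (hadamard f (\<lambda>w. hs n w - h w) z)"
        by (simp add: dist_norm hadamard_diff[OF f hs h z(2)])
      also have "\<dots> \<le> A * \<delta> * (\<rho> / (\<rho> - 1))"
        by (rule hadamard_geometric_estimate(2)[OF A coeff \<rho>(1) t(1) z(1)])
      also have "\<dots> < e"
        using \<delta>(2) by (simp add: C_def mult_ac)
      finally show "dist (hadamard f (hs n) z) (hadamard f h z) < e" .
    qed
  qed
qed

lemma compact_subset_ball_imp_cball:
  fixes K :: "'a::metric_space set"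
  assumes "compact K" "K \<subseteq> ball a r"
  obtains s where "s < r" "K \<subseteq> cball a s"
proof (cases "K = {}")
  case True
  then show ?thesis
    using that[of "r - 1"] by simp
next
  case False
  have "continuous_on K (\<lambda>y. dist a y)"
    by (intro continuous_intros)
  then obtain x where "x \<in> K" "\<And>y. y \<in> K \<Longrightarrow> dist a y \<le> dist a x"
    using continuous_attains_sup[OF assms(1) False] by blast
  moreover have "dist a x < r"
    using \<open>x \<in> K\<close> assms(2) by auto
  ultimately show ?thesis
    using that[of "dist a x"] by (auto simp: subset_iff)
qed

lemma Hurwitz_no_zeros_ball:
  assumes hol: "\<And>n. F n holomorphic_on ball a r" "G holomorphic_on ball a r"
    and lim: "\<And>s. s < r \<Longrightarrow> uniform_limit (cball a s) F G sequentially"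
    and nz: "\<And>n z. z \<in> ball a r \<Longrightarrow> F n z \<noteq> 0" and "G a \<noteq> 0" and z: "z \<in> ball a r"
  shows "G z \<noteq> 0"
proof (cases "G constant_on ball a r")
  case True
  then obtain c where "\<And>w. w \<in> ball a r \<Longrightarrow> G w = c"
    unfolding constant_on_def by blast
  moreover have "a \<in> ball a r"
    using z by (auto intro: le_less_trans[OF zero_le_dist])
  ultimately show ?thesis
    using \<open>G a \<noteq> 0\<close> z by metis
next
  case False
  show ?thesis
  proof (rule Hurwitz_no_zeros[OF open_ball connected_ball hol _ False nz z])
    fix K assume "compact K" "K \<subseteq> ball a r"
    then obtain s where "s < r" "K \<subseteq> cball a s"
      by (rule compact_subset_ball_imp_cball)
    then show "uniform_limit K F G sequentially"
      using lim uniform_limit_on_subset by blast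
  qed
qed

lemma dist_of_real_mult_le:
  assumes "0 \<le> r" "r \<le> 1" "norm (z::complex) \<le> 1"
  shows "dist (of_real r * z) z \<le> 1 - r"
proof -
  have "norm (1 - of_real r :: complex) = 1 - r"
    using assms by (metis abs_of_nonneg diff_ge_0_iff_ge norm_of_real of_real_1 of_real_diff)
  moreover have "of_real r * z - z = - ((1 - of_real r) * z)"
    by (simp add: algebra_simps)
  ultimately have "dist (of_real r * z) z = (1 - r) * norm z"
    by (metis dist_norm norm_minus_cancel norm_mult)
  also have "\<dots> \<le> 1 - r"
    using assms by (simp add: mult_left_le)
  finally show ?thesis .
qed

lemma uniform_limit_Px:
  assumes g: "continuous_on (ball 0 1) g" and t: "t < 1"
  shows "uniform_limit (cball 0 t) (\<lambda>r. Px (of_real r) g) g (at_left 1)"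
proof (rule uniform_limitI)
  fix e :: real assume "0 < e"
  have "cball 0 t \<subseteq> ball 0 1"
    using t by auto
  then have "uniformly_continuous_on (cball 0 t) g"
    using g by (intro compact_uniformly_continuous) (auto intro: continuous_on_subset)
  then obtain d where "0 < d"
    and d: "\<And>x x'. x \<in> cball 0 t \<Longrightarrow> x' \<in> cball 0 t \<Longrightarrow> dist x' x < d \<Longrightarrow> dist (g x') (g x) < e"
    using \<open>0 < e\<close> unfolding uniformly_continuous_on_def by metis
  have "\<forall>\<^sub>F r in at_left 1. r \<in> {max 0 (1 - d)<..<1}"
    by (rule eventually_at_left_real) (use \<open>0 < d\<close> in auto)
  then show "\<forall>\<^sub>F r in at_left 1. \<forall>z\<in>cball 0 t. dist (Px (of_real r) g z) (g z) < e"
  proof (rule eventually_mono)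
    fix r :: real assume r: "r \<in> {max 0 (1 - d)<..<1}"
    show "\<forall>z\<in>cball 0 t. dist (Px (of_real r) g z) (g z) < e"
    proof
      fix z :: complex assume z: "z \<in> cball 0 t"
      have "r * norm z \<le> norm z"
        using r by (simp add: mult_left_le_one_le)
      then have "of_real r * z \<in> cball 0 t"
        using r z by (simp add: norm_mult)
      moreover have "dist (of_real r * z) z < d"
        using dist_of_real_mult_le[of r z] r z t by force
      ultimately show "dist (Px (of_real r) g z) (g z) < e"
        using d[OF z] by (simp add: Px_def)
    qed
  qed
qed

lemma A_closureI:
  assumes "h \<in> A_space" "F \<noteq> bot" "\<forall>\<^sub>F i in F. hs i \<in> S"
    and lim: "\<And>t. t < 1 \<Longrightarrow> uniform_limit (cball 0 t) hs h F"
  shows "h \<in> A_closure S"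
  unfolding A_closure_def
proof (intro CollectI conjI allI impI assms(1))
  fix r e :: real assume "r < 1" "0 < e"
  then have "\<forall>\<^sub>F i in F. hs i \<in> S \<and> (\<forall>z\<in>cball 0 r. dist (hs i z) (h z) < e)"
    using assms(3) uniform_limitD[OF lim] by (simp add: eventually_conj)
  then obtain i where "hs i \<in> S" "\<forall>z\<in>cball 0 r. dist (hs i z) (h z) < e"
    using eventually_happens' assms(2) by blast
  then show "\<exists>g\<in>S. \<forall>z\<in>cball 0 r. cmod (g z - h z) < e"
    by (auto simp: dist_norm)
qed

lemma A_closure_imp_uniform_limit:
  assumes "h \<in> A_closure S"
  obtains hs where "\<And>n. hs n \<in> S" "\<And>t. t < 1 \<Longrightarrow> uniform_limit (cball 0 t) hs h sequentially"
proof -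
  define \<epsilon> where "\<epsilon> n = inverse (real (Suc n))" for n
  have "\<forall>n. \<exists>g\<in>S. \<forall>z\<in>cball 0 (1 - \<epsilon> n). cmod (g z - h z) < \<epsilon> n"
    using assms by (simp add: A_closure_def \<epsilon>_def)
  then obtain hs where hs: "\<And>n. hs n \<in> S"
    and close: "\<And>n z. z \<in> cball 0 (1 - \<epsilon> n) \<Longrightarrow> cmod (hs n z - h z) < \<epsilon> n"
    by metis
  have "uniform_limit (cball 0 t) hs h sequentially" if "t < 1" for t
  proof (rule uniform_limitI)
    fix e :: real assume "0 < e"
    have "\<epsilon> \<longlonglongrightarrow> 0"
      unfolding \<epsilon>_def by (rule LIMSEQ_inverse_real_of_nat)
    then have "\<forall>\<^sub>F n in sequentially. \<epsilon> n < min e (1 - t)"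
      using \<open>0 < e\<close> \<open>t < 1\<close> by (intro order_tendstoD(2)) auto
    then show "\<forall>\<^sub>F n in sequentially. \<forall>z\<in>cball 0 t. dist (hs n z) (h z) < e"
    proof (rule eventually_mono)
      fix n assume "\<epsilon> n < min e (1 - t)"
      then have "cball 0 t \<subseteq> cball 0 (1 - \<epsilon> n)" "\<epsilon> n < e"
        by auto
      then show "\<forall>z\<in>cball 0 t. dist (hs n z) (h z) < e"
        using close by (fastforce simp: dist_norm)
    qed
  qed
  with hs that show ?thesis
    by blast
qed

lemma A0_clE:
  assumes "f \<in> A0_cl"
  obtains R where "1 < R" "f holomorphic_on ball 0 R" "f 0 = 1"
  using assms by (auto simp: A0_cl_def A_cl_def)

lemma perp_cm_eq:
  assumes "U \<subseteq> A0_cl"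
  shows "perp (cm U) = {g \<in> A0. \<forall>f\<in>U. \<forall>x\<in>cball 0 1. hadamard f g x \<noteq> 0}"
proof -
  have "hadamard (Px x f) g 1 = hadamard f g x" if "f \<in> U" "x \<in> cball 0 1" for f g x
  proof -
    obtain R where "1 < R" "f holomorphic_on ball 0 R"
      using \<open>f \<in> U\<close> assms by (blast elim: A0_clE)
    then show ?thesis
      using hadamard_Px_left \<open>x \<in> cball 0 1\<close> by simp
  qed
  then show ?thesis
    unfolding perp_def cm_def by fastforce
qed

lemma Px_in_perp_cm:
  assumes U: "U \<subseteq> A0_cl" and g: "g \<in> dual U" and r: "norm r < 1"
  shows "Px r g \<in> perp (cm U)"
proof -
  have hol: "g holomorphic_on ball 0 1" and "g 0 = 1"
    using g by (auto simp: dual_def A0_def A_space_def)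
  then have "Px r g \<in> A0"
    using Px_holomorphic r by (simp add: A0_def A_space_def Px_def)
  moreover have "hadamard f (Px r g) x \<noteq> 0" if "f \<in> U" "x \<in> cball 0 1" for f x
  proof -
    have "norm r * norm x \<le> norm r"
      using \<open>x \<in> cball 0 1\<close> by (simp add: mult_left_le)
    then have "r * x \<in> ball 0 1"
      using r by (simp add: norm_mult)
    then show ?thesis
      using g \<open>f \<in> U\<close> hadamard_Px_right[OF hol] r by (simp add: dual_def)
  qed
  ultimately show ?thesis
    using perp_cm_eq[OF U] by blast
qed

lemma hadamard_nonzero_limit:
  assumes f: "f holomorphic_on ball 0 R" "1 < R" "f 0 \<noteq> 0"
    and hs: "\<And>n. hs n holomorphic_on ball 0 1" "\<And>n w. w \<in> ball 0 1 \<Longrightarrow> hadamard f (hs n) w \<noteq> 0"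
    and h: "h holomorphic_on ball 0 1" "h 0 \<noteq> 0"
    and lim: "\<And>t. t < 1 \<Longrightarrow> uniform_limit (cball 0 t) hs h sequentially"
    and z: "z \<in> ball 0 1"
  shows "hadamard f h z \<noteq> 0"
proof (rule Hurwitz_no_zeros_ball[where F = "\<lambda>n. hadamard f (hs n)" and G = "hadamard f h"])
  show "\<And>s. s < 1 \<Longrightarrow> uniform_limit (cball 0 s) (\<lambda>n. hadamard f (hs n)) (hadamard f h) sequentially"
    by (rule uniform_limit_hadamard[OF f(1,2) hs(1) h(1) lim])
  show "hadamard f h 0 \<noteq> 0"
    using f(3) h(2) by (simp add: hadamard_0)
qed (use hadamard_holomorphic[OF f(1,2)] hs h z in auto)

lemma dual_subset_A_closure_perp_cm:
  assumes "U \<subseteq> A0_cl"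
  shows "dual U \<subseteq> A_closure (perp (cm U))"
proof
  fix g assume g: "g \<in> dual U"
  then have hol: "g holomorphic_on ball 0 1"
    by (simp add: dual_def A0_def A_space_def)
  have "\<forall>\<^sub>F r in at_left 1. Px (of_real r) g \<in> perp (cm U)"
    using eventually_at_left_real[of 0 1]
    by (rule eventually_mono) (auto intro: Px_in_perp_cm[OF assms g])
  moreover have "\<And>t. t < 1 \<Longrightarrow> uniform_limit (cball 0 t) (\<lambda>r. Px (of_real r) g) g (at_left 1)"
    using hol by (intro uniform_limit_Px holomorphic_on_imp_continuous_on)
  ultimately show "g \<in> A_closure (perp (cm U))"
    using hol by (intro A_closureI) (auto simp: A_space_def)
qed

lemma A_closure_perp_cm_subset_dual:
  assumes "U \<subseteq> A0_cl"
  shows "A_closure (perp (cm U)) \<subseteq> dual U"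
proof
  fix h assume h: "h \<in> A_closure (perp (cm U))"
  obtain hs where hs: "\<And>n. hs n \<in> perp (cm U)"
    and lim: "\<And>t. t < 1 \<Longrightarrow> uniform_limit (cball 0 t) hs h sequentially"
    using A_closure_imp_uniform_limit[OF h] by metis
  have hol: "h holomorphic_on ball 0 1"
    using h by (simp add: A_closure_def A_space_def)
  have hs_hol: "\<And>n. hs n holomorphic_on ball 0 1" and "\<And>n. hs n 0 = 1"
    using hs by (simp_all add: perp_def A0_def A_space_def)
  then have "h 0 = 1"
    using tendsto_uniform_limitI[OF lim[of 0]] by (simp add: LIMSEQ_const_iff)
  have "hadamard f h z \<noteq> 0" if "f \<in> U" "z \<in> ball 0 1" for f z
  proof -
    obtain R where f: "f holomorphic_on ball 0 R" "1 < R" "f 0 = 1"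
      using \<open>f \<in> U\<close> assms by (blast elim: A0_clE)
    have "\<And>n w. w \<in> ball 0 1 \<Longrightarrow> hadamard f (hs n) w \<noteq> 0"
      using hs perp_cm_eq[OF assms] \<open>f \<in> U\<close> by auto
    then show ?thesis
      using f \<open>h 0 = 1\<close>
      by (intro hadamard_nonzero_limit[OF f(1,2) _ hs_hol _ hol _ lim \<open>z \<in> ball 0 1\<close>]) auto
  qed
  with hol \<open>h 0 = 1\<close> show "h \<in> dual U"
    by (simp add: dual_def A0_def A_space_def)
qed

theorem mainTheorem2:
  assumes "U \<subseteq> A0_cl"
  shows "dual U = A_closure (perp (cm U))"
  using dual_subset_A_closure_perp_cm[OF assms] A_closure_perp_cm_subset_dual[OF assms]
  by (rule equalityI)

end
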